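(* Let $R$ be a random length-$k$ ranking generated by a PL+C model. For items $i,j\in\mathcal U$, write $i\succ_R j$ if $i$ is ranked higher than $j$ in $R$. If $\Pr(i\succ_R j\mid i,j\in R)>1/2$, then $u_i>u_j$.
   Context: PL+C model: universe $\mathcal U=\{1,\dots,n\}$, fixed ranking length $k\le n$. Each item $h$ has a utility $u_h\in\mathbb R$ and a consideration probability $p_h\in(0,1]$. A consideration set $C$ is drawn by including each item independently with probability $p_h$, conditioned on $|C|\ge k$. Given $C$, a length-$k$ ranking $r=(r_1,\dots,r_k)$ of distinct items is drawn with Plackett--Luce probability $\Pr_{PL}(r\mid C)=\prod_{t=1}^k \frac{\exp(u_{r_t})}{\sum_{h\in C\setminus\{r_1,\dots,r_{t-1}\}}\exp(u_h)}$ if all $r_t\in C$, else $0$. "$i,j\in R$" means both items appear in the ranking $R$. *)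

theory Defs
  imports Complex_Main
begin

definition cons_weight :: "nat set \<Rightarrow> (nat \<Rightarrow> real) \<Rightarrow> nat set \<Rightarrow> real" where
  "cons_weight U p C = (\<Prod>h\<in>U. if h \<in> C then p h else 1 - p h)"

definition valid_cons_sets :: "nat set \<Rightarrow> nat \<Rightarrow> nat set set" where
  "valid_cons_sets U k = {C. C \<subseteq> U \<and> k \<le> card C}"

definition cons_prob :: "nat set \<Rightarrow> nat \<Rightarrow> (nat \<Rightarrow> real) \<Rightarrow> nat set \<Rightarrow> real" where
  "cons_prob U k p C =
     (if C \<in> valid_cons_sets U k
      then cons_weight U p C / (\<Sum>C'\<in>valid_cons_sets U k. cons_weight U p C')
      else 0)"

definition pl_prob :: "(nat \<Rightarrow> real) \<Rightarrow> nat set \<Rightarrow> nat list \<Rightarrow> real" where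
  "pl_prob u C r =
     (if distinct r \<and> set r \<subseteq> C
      then (\<Prod>t<length r. exp (u (r ! t)) / (\<Sum>h\<in>C - set (take t r). exp (u h)))
      else 0)"

definition rankings :: "nat set \<Rightarrow> nat \<Rightarrow> nat list set" where
  "rankings U k = {r. distinct r \<and> length r = k \<and> set r \<subseteq> U}"

definition plc_prob :: "nat set \<Rightarrow> nat \<Rightarrow> (nat \<Rightarrow> real) \<Rightarrow> (nat \<Rightarrow> real) \<Rightarrow> nat list \<Rightarrow> real" where
  "plc_prob U k p u r = (\<Sum>C\<in>valid_cons_sets U k. cons_prob U k p C * pl_prob u C r)"

definition ranked_above :: "nat \<Rightarrow> nat \<Rightarrow> nat list \<Rightarrow> bool" where
  "ranked_above i j r = (\<exists>a b. a < b \<and> b < length r \<and> r ! a = i \<and> r ! b = j)"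

definition pair_pref :: "nat set \<Rightarrow> nat \<Rightarrow> (nat \<Rightarrow> real) \<Rightarrow> (nat \<Rightarrow> real) \<Rightarrow> nat \<Rightarrow> nat \<Rightarrow> real" where
  "pair_pref U k p u i j =
     (\<Sum>r\<in>{r \<in> rankings U k. ranked_above i j r}. plc_prob U k p u r)
     / (\<Sum>r\<in>{r \<in> rankings U k. i \<in> set r \<and> j \<in> set r}. plc_prob U k p u r)"

end

theory Submission
  imports Defs "HOL-Combinatorics.Transposition"
begin

text \<open>If \<open>u i \<le> u j\<close>, exchanging \<open>i\<close> and \<open>j\<close> in a ranking that places \<open>i\<close> above \<open>j\<close>
  cannot lower its Plackett--Luce probability under any consideration set: the numerators form
  the same product of \<open>exp\<close>-utilities, and each partial denominator is either unchanged or has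
  \<open>exp (u j)\<close> of the still unranked \<open>j\<close> replaced by \<open>exp (u i)\<close>. The consideration set is drawn
  independently of the ranking, so the same holds for PL+C probabilities, and the exchange maps
  the rankings with \<open>i\<close> above \<open>j\<close> bijectively onto those with \<open>j\<close> above \<open>i\<close>. Hence the
  conditional probability of \<open>i\<close> above \<open>j\<close> is at most \<open>1/2\<close>.\<close>

lemma ranked_above_imp_mem: "ranked_above i j r \<Longrightarrow> i \<in> set r \<and> j \<in> set r"
  unfolding ranked_above_def by (metis less_trans nth_mem)

lemma ranked_above_map: "ranked_above i j r \<Longrightarrow> ranked_above (f i) (f j) (map f r)"
  unfolding ranked_above_def by (metis length_map less_trans nth_map)

lemma ranked_above_irrefl: "distinct r \<Longrightarrow> \<not> ranked_above i i r"
  unfolding ranked_above_def by (metis less_trans nat_neq_iff nth_eq_iff_index_eq)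

lemma ranked_above_asym: "distinct r \<Longrightarrow> ranked_above i j r \<Longrightarrow> \<not> ranked_above j i r"
  unfolding ranked_above_def by (metis less_trans nth_eq_iff_index_eq order.asym)

lemma ranked_above_total:
  "i \<in> set r \<Longrightarrow> j \<in> set r \<Longrightarrow> i \<noteq> j \<Longrightarrow> ranked_above i j r \<or> ranked_above j i r"
  unfolding ranked_above_def by (metis in_set_conv_nth nat_neq_iff)

lemma nth_notin_set_take: "distinct r \<Longrightarrow> t < length r \<Longrightarrow> r ! t \<notin> set (take t r)"
  by (auto simp: in_set_conv_nth nth_eq_iff_index_eq)

lemma ranked_above_mem_take:
  assumes "distinct r" "ranked_above i j r" "j \<in> set (take t r)"
  shows "i \<in> set (take t r)"
proof -
  obtain a b where ab: "a < b" "b < length r" "r ! a = i" "r ! b = j"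
    using assms(2) unfolding ranked_above_def by blast
  have "b < t"
  proof (rule ccontr)
    assume "\<not> b < t"
    then have "set (take t r) \<subseteq> set (take b r)" by (simp add: set_take_subset_set_take)
    then show False using assms(1,3) ab(2,4) nth_notin_set_take by blast
  qed
  then have "a < length (take t r)" "take t r ! a = i" using ab by auto
  then show ?thesis by (metis nth_mem)
qed

lemma sum_diff_transpose_image_le:
  fixes w :: "'a \<Rightarrow> 'b::ordered_comm_monoid_add"
  assumes "finite C" "i \<in> C" "j \<in> C" "j \<in> T \<Longrightarrow> i \<in> T" "w i \<le> w j"
  shows "(\<Sum>h\<in>C - transpose i j ` T. w h) \<le> (\<Sum>h\<in>C - T. w h)"
proof (cases "i \<in> T \<and> j \<notin> T")
  case True
  define S where "S = C - T - {j}"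
  have "C - transpose i j ` T = insert i S" "C - T = insert j S"
    using True assms(2,3) by (auto simp: S_def in_transpose_image_iff transpose_def)
  moreover have "finite S" "i \<notin> S" "j \<notin> S" using True assms(1) by (auto simp: S_def)
  ultimately show ?thesis using assms(5) by (simp add: add_right_mono)
next
  case False
  then have "transpose i j ` T = T" using assms(4) by (intro transpose_image_eq) blast
  then show ?thesis by simp
qed

lemma pl_prob_nonneg: "0 \<le> pl_prob u C r"
  unfolding pl_prob_def by (auto intro!: prod_nonneg divide_nonneg_nonneg sum_nonneg)

lemma pl_remaining_weight_pos:
  fixes u :: "'a \<Rightarrow> real"
  assumes "finite C" "distinct r" "set r \<subseteq> C" "t < length r"
  shows "0 < (\<Sum>h\<in>C - set (take t r). exp (u h))"
proof -
  have "r ! t \<in> C - set (take t r)"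
    using assms(2-4) nth_notin_set_take nth_mem by blast
  then show ?thesis using assms(1) by (intro sum_pos) auto
qed

lemma pl_prob_eq_prod_set:
  assumes "distinct r" "set r \<subseteq> C"
  shows "pl_prob u C r =
    (\<Prod>x\<in>set r. exp (u x)) / (\<Prod>t<length r. \<Sum>h\<in>C - set (take t r). exp (u h))"
proof -
  have "(\<Prod>t<length r. exp (u (r ! t))) = (\<Prod>x\<in>set r. exp (u x))"
    using prod.reindex_bij_betw[OF bij_betw_nth[OF assms(1) refl refl]] .
  moreover have "pl_prob u C r =
      (\<Prod>t<length r. exp (u (r ! t))) / (\<Prod>t<length r. \<Sum>h\<in>C - set (take t r). exp (u h))"
    using assms unfolding pl_prob_def by (simp only: if_True simp_thms prod_dividef)
  ultimately show ?thesis by simp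
qed

lemma pl_prob_transpose_ge:
  assumes "finite C" "ranked_above i j r" "u i \<le> u j"
  shows "pl_prob u C r \<le> pl_prob u C (map (transpose i j) r)"
proof (cases "distinct r \<and> set r \<subseteq> C")
  case False
  then have "pl_prob u C r = 0" by (simp only: pl_prob_def if_False)
  then show ?thesis using pl_prob_nonneg by simp
next
  case True
  define r' where "r' = map (transpose i j) r"
  define W where "W x t = (\<Sum>h\<in>C - set (take t x). exp (u h))" for x t
  have ij: "i \<in> set r" "j \<in> set r" using ranked_above_imp_mem[OF assms(2)] by auto
  have set_r': "set r' = set r" using ij by (simp add: r'_def)
  have r': "distinct r'" "set r' \<subseteq> C" "length r' = length r"
    using True set_r' by (auto simp: r'_def distinct_map)
  have W_pos: "0 < W r' t" if "t < length r" for t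
    using pl_remaining_weight_pos[of C r' t u] assms(1) r' that by (simp add: W_def)
  have W_le: "W r' t \<le> W r t" for t
    unfolding W_def r'_def take_map set_map
    using assms True ij ranked_above_mem_take by (intro sum_diff_transpose_image_le) auto
  have "0 < (\<Prod>t<length r. W r' t)" using W_pos by (intro prod_pos) auto
  moreover have "(\<Prod>t<length r. W r' t) \<le> (\<Prod>t<length r. W r t)"
    using W_pos W_le by (intro prod_mono) (auto simp: less_imp_le)
  ultimately have "(\<Prod>x\<in>set r. exp (u x)) / (\<Prod>t<length r. W r t)
      \<le> (\<Prod>x\<in>set r. exp (u x)) / (\<Prod>t<length r. W r' t)"
    by (intro divide_left_mono prod_nonneg mult_pos_pos) auto
  then show ?thesis
    using pl_prob_eq_prod_set[of r C u] pl_prob_eq_prod_set[of r' C u] True r' set_r'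
    by (simp add: W_def r'_def)
qed

lemma cons_prob_nonneg:
  assumes "\<And>h. h \<in> U \<Longrightarrow> 0 \<le> p h \<and> p h \<le> 1"
  shows "0 \<le> cons_prob U k p C"
proof -
  have "0 \<le> cons_weight U p C'" for C'
    unfolding cons_weight_def using assms by (intro prod_nonneg) auto
  then show ?thesis unfolding cons_prob_def by (auto intro!: divide_nonneg_nonneg sum_nonneg)
qed

lemma plc_prob_nonneg:
  assumes "\<And>h. h \<in> U \<Longrightarrow> 0 \<le> p h \<and> p h \<le> 1"
  shows "0 \<le> plc_prob U k p u r"
  unfolding plc_prob_def using assms
  by (intro sum_nonneg mult_nonneg_nonneg cons_prob_nonneg pl_prob_nonneg)

lemma plc_prob_transpose_ge:
  assumes "finite U" "\<And>h. h \<in> U \<Longrightarrow> 0 \<le> p h \<and> p h \<le> 1"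
    and "ranked_above i j r" "u i \<le> u j"
  shows "plc_prob U k p u r \<le> plc_prob U k p u (map (transpose i j) r)"
  unfolding plc_prob_def
proof (intro sum_mono mult_left_mono)
  fix C assume "C \<in> valid_cons_sets U k"
  then have "finite C" using assms(1) by (auto simp: valid_cons_sets_def intro: finite_subset)
  then show "pl_prob u C r \<le> pl_prob u C (map (transpose i j) r)"
    using assms(3,4) by (rule pl_prob_transpose_ge)
qed (use assms(2) cons_prob_nonneg in blast)

lemma finite_rankings: "finite U \<Longrightarrow> finite (rankings U k)"
  unfolding rankings_def
  by (rule finite_subset[OF _ finite_lists_length_eq[of U k]]) auto

lemma bij_betw_transpose_ranked_above:
  "bij_betw (map (transpose i j))
     {r \<in> rankings U k. ranked_above i j r} {r \<in> rankings U k. ranked_above j i r}"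
proof (rule bij_betw_byWitness[where f' = "map (transpose i j)"])
  have "map (transpose i j) r \<in> rankings U k" if "r \<in> rankings U k" "i \<in> set r" "j \<in> set r" for r
    using that by (simp add: rankings_def distinct_map)
  then show "map (transpose i j) ` {r \<in> rankings U k. ranked_above i j r}
      \<subseteq> {r \<in> rankings U k. ranked_above j i r}"
    and "map (transpose i j) ` {r \<in> rankings U k. ranked_above j i r}
      \<subseteq> {r \<in> rankings U k. ranked_above i j r}"
    using ranked_above_imp_mem ranked_above_map[of i j _ "transpose i j"]
      ranked_above_map[of j i _ "transpose i j"] by auto
qed (simp_all add: comp_def)

lemma pair_pref_le_half:
  assumes "finite U" "\<And>h. h \<in> U \<Longrightarrow> 0 \<le> p h \<and> p h \<le> 1" "u i \<le> u j"
  shows "pair_pref U k p u i j \<le> 1/2"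
proof -
  define P where "P = plc_prob U k p u"
  define A where "A = {r \<in> rankings U k. ranked_above i j r}"
  define B where "B = {r \<in> rankings U k. ranked_above j i r}"
  have A_nonneg: "0 \<le> sum P A"
    using assms(2) by (auto simp: P_def intro: sum_nonneg plc_prob_nonneg)
  have "sum P A \<le> (\<Sum>r\<in>A. P (map (transpose i j) r))"
    using assms by (auto simp: P_def A_def intro!: sum_mono plc_prob_transpose_ge)
  also have "\<dots> = sum P B"
    using sum.reindex_bij_betw[OF bij_betw_transpose_ranked_above] by (simp add: A_def B_def)
  finally have A_le_B: "sum P A \<le> sum P B" .
  show ?thesis
  proof (cases "i = j")
    case True
    then have "A = {}" by (auto simp: A_def rankings_def ranked_above_irrefl)
    then show ?thesis unfolding pair_pref_def A_def[symmetric] by simp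
  next
    case False
    have "{r \<in> rankings U k. i \<in> set r \<and> j \<in> set r} = A \<union> B"
      using ranked_above_total[OF _ _ False] ranked_above_imp_mem by (auto simp: A_def B_def)
    moreover have "A \<inter> B = {}"
      using ranked_above_asym by (auto simp: A_def B_def rankings_def)
    moreover have "finite A" "finite B"
      using finite_rankings[OF assms(1)] by (auto simp: A_def B_def)
    ultimately have "pair_pref U k p u i j = sum P A / (sum P A + sum P B)"
      by (simp add: pair_pref_def P_def A_def sum.union_disjoint)
    also have "\<dots> \<le> 1/2"
      using A_nonneg A_le_B by (simp add: divide_le_eq)
    finally show ?thesis .
  qed
qed

theorem lemma2:
  fixes n k :: nat and u p :: "nat \<Rightarrow> real" and i j :: nat
  assumes "k \<le> n"
    and "\<And>h. h \<in> {1..n} \<Longrightarrow> 0 < p h \<and> p h \<le> 1"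
    and "i \<in> {1..n}" and "j \<in> {1..n}"
    and "pair_pref {1..n} k p u i j > 1/2"
  shows "u i > u j"
proof (rule ccontr)
  assume "\<not> u i > u j"
  then have "pair_pref {1..n} k p u i j \<le> 1/2"
    using assms(2) by (intro pair_pref_le_half) (auto simp: less_imp_le)
  with assms(5) show False by simp
qed

end
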